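(* Let $\mathbb{X}=\{T,F\}$, $n\ge1$, and for $i=1,\dots,n$ let $m_i$ be a mass function on $\mathbb{X}_i=\mathbb{X}$ with belief function $Bel_{\mathbb{X}_i}$. Let $m$ be the mass function of the disjunctive combination of the vacuous extensions of $Bel_{\mathbb{X}_1},\dots,Bel_{\mathbb{X}_n}$ to $\mathbb{X}_1\times\cdots\times\mathbb{X}_n$. Then for every tuple $(x_1,\dots,x_n)$ with $x_i\in\mathbb{X}$, \[ m\big(\{(x_1,\dots,x_n)\}^c\big)=\prod_{i=1}^n m_i(\{x_i\}^c), \] $m(\mathbb{X}_1\times\cdots\times\mathbb{X}_n)=1-\sum_{(x_1,\dots,x_n)}\prod_{i=1}^n m_i(\{x_i\}^c)$, and $m$ vanishes on all other subsets. In particular, when every $m_i$ gives positive mass to $\{T\}$, $\{F\}$ and $\mathbb{X}$, the combination has exactly $2^n+1$ focal elements: the $2^n$ complements of singletons of $\mathbb{X}_1\times\cdots\times\mathbb{X}_n$ and the whole product.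
   Context: Mass function on a finite set $\Theta$: $m:2^\Theta\to[0,1]$ with $m(\emptyset)=0$ and $\sum_A m(A)=1$; focal elements are sets of positive mass; $Bel(A)=\sum_{B\subseteq A}m(B)$. Disjunctive combination: $m_{\cup}(A)=\sum_{B\cup C=A}m_1(B)m_2(C)$, extended associatively to $n$ arguments. Complements $\{x_i\}^c$ are taken in $\mathbb{X}$ and $\{(x_1,\dots,x_n)\}^c$ in $\mathbb{X}_1\times\cdots\times\mathbb{X}_n$. Vacuous extension of $m_i$ to $\mathbb{X}_1\times\cdots\times\mathbb{X}_n$: mass $m_i(B)$ on $\mathbb{X}_1\times\cdots\times\mathbb{X}_{i-1}\times B\times\mathbb{X}_{i+1}\times\cdots\times\mathbb{X}_n$, zero elsewhere. *)

theory Defs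
  imports Complex_Main
begin

text \<open>Frame X = {T,F} is rendered as type bool (T = True, F = False).
  Tuples (x_1,...,x_n) are lists of length n; index i of the paper is list index i-1.\<close>

definition is_mass :: "'a set \<Rightarrow> ('a set \<Rightarrow> real) \<Rightarrow> bool" where
  "is_mass \<Theta> m \<longleftrightarrow> m {} = 0 \<and> (\<forall>A. 0 \<le> m A \<and> m A \<le> 1)
     \<and> (\<forall>A. \<not> A \<subseteq> \<Theta> \<longrightarrow> m A = 0) \<and> (\<Sum>A\<in>Pow \<Theta>. m A) = 1"

definition focal :: "('a set \<Rightarrow> real) \<Rightarrow> 'a set set" where
  "focal m = {A. m A > 0}"

definition bel :: "('a set \<Rightarrow> real) \<Rightarrow> 'a set \<Rightarrow> real" where
  "bel m A = (\<Sum>B\<in>Pow A. m B)"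

definition prodsp :: "nat \<Rightarrow> bool list set" where
  "prodsp n = {xs. length xs = n}"

definition cyl :: "nat \<Rightarrow> nat \<Rightarrow> bool set \<Rightarrow> bool list set" where
  "cyl n i B = {xs. length xs = n \<and> xs ! i \<in> B}"

definition vac :: "nat \<Rightarrow> nat \<Rightarrow> (bool set \<Rightarrow> real) \<Rightarrow> bool list set \<Rightarrow> real" where
  "vac n i mi A = (\<Sum>B\<in>{B. cyl n i B = A}. mi B)"

definition disj :: "'a set \<Rightarrow> ('a set \<Rightarrow> real) \<Rightarrow> ('a set \<Rightarrow> real) \<Rightarrow> 'a set \<Rightarrow> real" where
  "disj \<Theta> m1 m2 A = (\<Sum>(B,C)\<in>{(B,C). B \<in> Pow \<Theta> \<and> C \<in> Pow \<Theta> \<and> B \<union> C = A}. m1 B * m2 C)"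

primrec disjN :: "'a set \<Rightarrow> (nat \<Rightarrow> 'a set \<Rightarrow> real) \<Rightarrow> nat \<Rightarrow> 'a set \<Rightarrow> real" where
  "disjN \<Theta> ms 0 = ms 0"
| "disjN \<Theta> ms (Suc k) = disj \<Theta> (disjN \<Theta> ms k) (ms (Suc k))"

end

theory Submission
  imports Defs
begin

text \<open>Combine the coordinates one at a time. After the first k of them the mass sits on the
  sets of tuples that do not begin with a given prefix ys of length k, with weight
  \<Prod>i<k. m_i({ys_i}^c), and the rest on the whole product; for k = 0 this is the mass concentrated
  on the empty set, the unit of disjunctive combination. Combining with the vacuous extension of m_k, the union with the cylinder over
  {b} is the set of tuples not beginning with ys @ [\<not> b], the union with the cylinder over X
  is everything, and m_k(\<emptyset>) = 0. For k = n the avoided prefixes are whole tuples, so the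
  focal sets are the complements of singletons, whose total weight is
  \<Prod>i<n. (m_i{T} + m_i{F}) < 1 as soon as every m_i(X) > 0.\<close>

lemma sum_length_Suc:
  "(\<Sum>zs\<in>{zs::'a::finite list. length zs = Suc k}. f zs)
    = (\<Sum>ys\<in>{ys. length ys = k}. \<Sum>b\<in>UNIV. f (ys @ [b]))"
proof -
  have snoc: "bij_betw (\<lambda>(ys, b). ys @ [b]) ({ys. length ys = k} \<times> UNIV) {zs. length zs = Suc k}"
    by (auto simp: bij_betw_def inj_on_def length_Suc_conv_rev)
  have "(\<Sum>zs\<in>{zs. length zs = Suc k}. f zs)
      = (\<Sum>(ys, b)\<in>{ys. length ys = k} \<times> UNIV. f (ys @ [b]))"
    using sum.reindex_bij_betw[OF snoc, of f] by (simp add: case_prod_unfold)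
  also have "\<dots> = (\<Sum>ys\<in>{ys. length ys = k}. \<Sum>b\<in>UNIV. f (ys @ [b]))"
    by (rule sum.cartesian_product[symmetric])
  finally show ?thesis .
qed

lemma sum_length_prod:
  fixes f :: "nat \<Rightarrow> 'a::finite \<Rightarrow> 'b::comm_semiring_1"
  shows "(\<Sum>xs\<in>{xs. length xs = k}. \<Prod>i<k. f i (xs ! i))
    = (\<Prod>i<k. \<Sum>a\<in>UNIV. f i a)"
proof (induction k)
  case 0
  then show ?case by simp
next
  case (Suc k)
  have "(\<Sum>xs\<in>{xs. length xs = Suc k}. \<Prod>i<Suc k. f i (xs ! i))
      = (\<Sum>ys\<in>{ys. length ys = k}. \<Sum>b\<in>UNIV. (\<Prod>i<k. f i (ys ! i)) * f k b)"
    unfolding sum_length_Suc by (intro sum.cong refl) (simp add: nth_append)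
  also have "\<dots> = (\<Sum>ys\<in>{ys. length ys = k}. \<Prod>i<k. f i (ys ! i)) * (\<Sum>b\<in>UNIV. f k b)"
    by (simp add: sum_product)
  finally show ?case
    by (simp add: Suc.IH)
qed

lemma sum_bool_sets:
  "(\<Sum>S\<in>UNIV. f S) = f {} + f {True} + f {False} + f (UNIV :: bool set)"
proof -
  have UNIV_eq: "(UNIV :: bool set set) = {{}, {True}, {False}, UNIV}"
    by (simp add: Pow_UNIV[symmetric] UNIV_bool Pow_insert insert_commute)
  have "{True} \<noteq> UNIV" "{False} \<noteq> UNIV"
    by auto
  then show ?thesis
    unfolding UNIV_eq by (simp add: add.assoc)
qed

lemma Compl_singleton_bool: "- {b} = {\<not> b}"
  by auto

lemma is_mass_bool:
  assumes "is_mass UNIV m"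
  shows "m {} = 0" and "m {True} + m {False} + m UNIV = 1"
  using assms by (simp_all add: is_mass_def sum_bool_sets)

lemma finite_prodsp: "finite (prodsp n)"
  by (simp add: prodsp_def finite_list_length)

lemma card_prodsp: "card (prodsp n) = 2 ^ n"
  using card_lists_length_eq[of "UNIV :: bool set" n] by (simp add: prodsp_def)

lemma cyl_subset_prodsp: "cyl n k S \<subseteq> prodsp n"
  by (auto simp: cyl_def prodsp_def)

lemma cyl_UNIV: "cyl n k UNIV = prodsp n"
  by (auto simp: cyl_def prodsp_def)

lemma vac_eq_sum: "vac n k mi A = (\<Sum>S\<in>UNIV. if cyl n k S = A then mi S else 0)"
  by (simp add: vac_def sum.inter_filter[symmetric])

lemma sum_Pow_prodsp_vac:
  "(\<Sum>C\<in>Pow (prodsp n). vac n k mi C * g C) = (\<Sum>S\<in>UNIV. mi S * g (cyl n k S))"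
proof -
  have "(\<Sum>C\<in>Pow (prodsp n). vac n k mi C * g C)
      = (\<Sum>C\<in>Pow (prodsp n). \<Sum>S\<in>UNIV. if cyl n k S = C then mi S * g C else 0)"
    unfolding vac_eq_sum sum_distrib_right by (intro sum.cong refl) simp
  also have "\<dots> = (\<Sum>S\<in>UNIV. \<Sum>C\<in>Pow (prodsp n). if cyl n k S = C then mi S * g C else 0)"
    by (rule sum.swap)
  also have "\<dots> = (\<Sum>S\<in>UNIV. mi S * g (cyl n k S))"
    using cyl_subset_prodsp by (simp add: finite_prodsp)
  finally show ?thesis .
qed

lemma disj_eq_sum:
  assumes "finite \<Theta>"
  shows "disj \<Theta> m1 m2 A = (\<Sum>B\<in>Pow \<Theta>. \<Sum>C\<in>Pow \<Theta>. if B \<union> C = A then m1 B * m2 C else 0)"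
proof -
  have "{(B, C). B \<in> Pow \<Theta> \<and> C \<in> Pow \<Theta> \<and> B \<union> C = A} = {p \<in> Pow \<Theta> \<times> Pow \<Theta>. fst p \<union> snd p = A}"
    by auto
  then have "disj \<Theta> m1 m2 A = (\<Sum>(B, C)\<in>Pow \<Theta> \<times> Pow \<Theta>. if B \<union> C = A then m1 B * m2 C else 0)"
    using assms by (simp add: disj_def sum.inter_filter case_prod_beta)
  then show ?thesis
    by (simp add: sum.cartesian_product)
qed

lemma disj_vac:
  "disj (prodsp n) D (vac n k mi) A
    = (\<Sum>B\<in>Pow (prodsp n). D B * (\<Sum>S\<in>UNIV. if B \<union> cyl n k S = A then mi S else 0))"
proof -
  have "(\<Sum>C\<in>Pow (prodsp n). if B \<union> C = A then D B * vac n k mi C else 0)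
      = D B * (\<Sum>S\<in>UNIV. if B \<union> cyl n k S = A then mi S else 0)" for B
    using sum_Pow_prodsp_vac[of n k mi "\<lambda>C. if B \<union> C = A then D B else 0"]
    unfolding sum_distrib_left by (simp add: if_distrib mult.commute cong: if_cong)
  then show ?thesis
    by (simp add: disj_eq_sum finite_prodsp)
qed

lemma disj_empty_vac: "disj (prodsp n) (\<lambda>B. of_bool (B = {})) (vac n k mi) = vac n k mi"
proof
  fix A
  have "Pow (prodsp n) \<inter> {B. B = {}} = {{}}"
    by auto
  then show "disj (prodsp n) (\<lambda>B. of_bool (B = {})) (vac n k mi) A = vac n k mi A"
    by (simp add: disj_vac vac_eq_sum finite_prodsp)
qed

definition avoid_prefix :: "nat \<Rightarrow> bool list \<Rightarrow> bool list set" where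
  "avoid_prefix n ys = {xs \<in> prodsp n. take (length ys) xs \<noteq> ys}"

definition prefix_weight :: "(nat \<Rightarrow> bool set \<Rightarrow> real) \<Rightarrow> bool list \<Rightarrow> real" where
  "prefix_weight M ys = (\<Prod>i<length ys. M i (- {ys ! i}))"

definition prefix_mass :: "nat \<Rightarrow> (nat \<Rightarrow> bool set \<Rightarrow> real) \<Rightarrow> nat \<Rightarrow> bool list set \<Rightarrow> real" where
  "prefix_mass n M k A =
     (\<Sum>ys | length ys = k. if A = avoid_prefix n ys then prefix_weight M ys else 0)
     + (if A = prodsp n then 1 - (\<Sum>ys | length ys = k. prefix_weight M ys) else 0)"

lemma avoid_prefix_Nil: "avoid_prefix n [] = {}"
  by (simp add: avoid_prefix_def)

lemma avoid_prefix_subset_prodsp: "avoid_prefix n ys \<subseteq> prodsp n"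
  by (auto simp: avoid_prefix_def)

lemma avoid_prefix_Un_cyl:
  assumes "length ys = k" and "k < n"
  shows "avoid_prefix n ys \<union> cyl n k {b} = avoid_prefix n (ys @ [\<not> b])"
proof -
  have "take (Suc k) xs = ys @ [\<not> b] \<longleftrightarrow> take k xs = ys \<and> xs ! k = (\<not> b)"
    if "length xs = n" for xs :: "bool list"
    using assms that by (auto simp: take_Suc_conv_app_nth)
  then show ?thesis
    using assms by (auto simp: avoid_prefix_def prodsp_def cyl_def)
qed

lemma avoid_prefix_length_eq:
  assumes "length xs = n"
  shows "avoid_prefix n xs = prodsp n - {xs}"
  using assms by (auto simp: avoid_prefix_def prodsp_def)

lemma prefix_weight_snoc:
  "prefix_weight M (ys @ [b]) = prefix_weight M ys * M (length ys) (- {b})"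
  by (simp add: prefix_weight_def nth_append)

lemma prefix_mass_0: "prefix_mass n M 0 = (\<lambda>A. of_bool (A = {}))"
proof -
  have "replicate n False \<in> prodsp n"
    by (simp add: prodsp_def)
  then show ?thesis
    by (auto simp: prefix_mass_def prefix_weight_def avoid_prefix_Nil)
qed

lemma sum_Pow_prefix_mass:
  "(\<Sum>B\<in>Pow (prodsp n). prefix_mass n M k B * h B)
    = (\<Sum>ys | length ys = k. prefix_weight M ys * h (avoid_prefix n ys))
      + (1 - (\<Sum>ys | length ys = k. prefix_weight M ys)) * h (prodsp n)"
proof -
  have "(\<Sum>B\<in>Pow (prodsp n). \<Sum>ys | length ys = k.
          (if B = avoid_prefix n ys then prefix_weight M ys else 0) * h B)
      = (\<Sum>ys | length ys = k. \<Sum>B\<in>Pow (prodsp n).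
          if B = avoid_prefix n ys then prefix_weight M ys * h B else 0)"
    by (subst sum.swap) (intro sum.cong refl, simp)
  also have "\<dots> = (\<Sum>ys | length ys = k. prefix_weight M ys * h (avoid_prefix n ys))"
    using avoid_prefix_subset_prodsp by (simp add: finite_prodsp)
  finally show ?thesis
    by (simp add: prefix_mass_def distrib_right sum.distrib sum_distrib_right finite_prodsp
        if_distrib[of "\<lambda>x. x * _"] cong: if_cong)
qed

lemma prefix_mass_Suc:
  "prefix_mass n M (Suc j) A =
     (\<Sum>ys | length ys = j. prefix_weight M ys *
        ((if A = avoid_prefix n (ys @ [True]) then M j {False} else 0)
         + (if A = avoid_prefix n (ys @ [False]) then M j {True} else 0)))
     + (if A = prodsp n
        then 1 - (\<Sum>ys | length ys = j. prefix_weight M ys * (M j {False} + M j {True})) else 0)"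
proof -
  let ?w = "prefix_weight M" and ?a = "avoid_prefix n"
  have "(\<Sum>b\<in>UNIV. if A = ?a (ys @ [b]) then ?w (ys @ [b]) else 0)
      = ?w ys * ((if A = ?a (ys @ [True]) then M j {False} else 0)
                 + (if A = ?a (ys @ [False]) then M j {True} else 0))"
    and "(\<Sum>b\<in>UNIV. ?w (ys @ [b])) = ?w ys * (M j {False} + M j {True})"
    if "length ys = j" for ys
    using that by (simp_all add: UNIV_bool prefix_weight_snoc Compl_singleton_bool algebra_simps)
  then show ?thesis
    by (simp add: prefix_mass_def sum_length_Suc)
qed

lemma sum_avoid_prefix_Un_cyl:
  assumes "length ys = j" and "j < n" and "is_mass UNIV mj"
  shows "(\<Sum>S\<in>UNIV. if avoid_prefix n ys \<union> cyl n j S = A then mj S else 0)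
    = (if A = avoid_prefix n (ys @ [True]) then mj {False} else 0)
      + (if A = avoid_prefix n (ys @ [False]) then mj {True} else 0)
      + (if A = prodsp n then mj UNIV else 0)"
proof -
  have "avoid_prefix n ys \<union> cyl n j UNIV = prodsp n"
    using avoid_prefix_subset_prodsp by (auto simp: cyl_UNIV)
  then show ?thesis
    using avoid_prefix_Un_cyl[OF assms(1,2)] is_mass_bool(1)[OF assms(3)]
    by (auto simp: sum_bool_sets)
qed

lemma sum_prodsp_Un_cyl:
  assumes "is_mass UNIV mj"
  shows "(\<Sum>S\<in>UNIV. if prodsp n \<union> cyl n j S = A then mj S else 0)
    = (if A = prodsp n then 1 else 0)"
  using cyl_subset_prodsp[of n j] is_mass_bool[OF assms]
  by (auto simp: sum_bool_sets Un_absorb2 add.assoc)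

lemma disj_prefix_mass_vac:
  assumes "j < n" and mass: "is_mass UNIV (M j)"
  shows "disj (prodsp n) (prefix_mass n M j) (vac n j (M j)) = prefix_mass n M (Suc j)"
proof
  fix A
  let ?w = "prefix_weight M"
  let ?split = "\<lambda>ys. (if A = avoid_prefix n (ys @ [True]) then M j {False} else 0)
                    + (if A = avoid_prefix n (ys @ [False]) then M j {True} else 0)"
  have "disj (prodsp n) (prefix_mass n M j) (vac n j (M j)) A
      = (\<Sum>ys | length ys = j. ?w ys * ?split ys)
        + (if A = prodsp n
           then (\<Sum>ys | length ys = j. ?w ys * M j UNIV) + 1 - (\<Sum>ys | length ys = j. ?w ys)
           else 0)"
    using \<open>j < n\<close> mass
    by (simp add: disj_vac sum_Pow_prefix_mass sum_avoid_prefix_Un_cyl sum_prodsp_Un_cyl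
        distrib_left sum.distrib)
  also have "\<dots> = prefix_mass n M (Suc j) A"
  proof -
    have "M j UNIV = 1 - (M j {False} + M j {True})"
      using is_mass_bool(2)[OF mass] by simp
    then have "?w ys * M j UNIV = ?w ys - ?w ys * (M j {False} + M j {True})" for ys
      by (simp add: right_diff_distrib)
    then show ?thesis
      by (simp add: prefix_mass_Suc sum_subtractf)
  qed
  finally show "disj (prodsp n) (prefix_mass n M j) (vac n j (M j)) A
      = prefix_mass n M (Suc j) A" .
qed

lemma disjN_vac_eq_prefix_mass:
  assumes "k < n" and "\<forall>i\<le>k. is_mass UNIV (M i)"
  shows "disjN (prodsp n) (\<lambda>i. vac n i (M i)) k = prefix_mass n M (Suc k)"
  using assms
proof (induction k)
  case 0
  then have "disjN (prodsp n) (\<lambda>i. vac n i (M i)) 0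
      = disj (prodsp n) (prefix_mass n M 0) (vac n 0 (M 0))"
    by (simp add: prefix_mass_0 disj_empty_vac)
  then show ?case
    using 0 by (simp add: disj_prefix_mass_vac)
next
  case (Suc k)
  then show ?case
    by (simp add: disj_prefix_mass_vac)
qed

definition cosingleton_mass :: "'a set \<Rightarrow> ('a \<Rightarrow> real) \<Rightarrow> 'a set \<Rightarrow> real" where
  "cosingleton_mass \<Theta> w A =
     (\<Sum>x\<in>\<Theta>. if A = \<Theta> - {x} then w x else 0) + (if A = \<Theta> then 1 - sum w \<Theta> else 0)"

lemma prefix_mass_length_eq:
  "prefix_mass n M n = cosingleton_mass (prodsp n) (\<lambda>xs. \<Prod>i<n. M i (- {xs ! i}))"
proof
  fix A
  let ?w = "\<lambda>xs. \<Prod>i<n. M i (- {xs ! i})"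
  have "(\<Sum>ys | length ys = n. if A = avoid_prefix n ys then prefix_weight M ys else 0)
      = (\<Sum>xs\<in>prodsp n. if A = prodsp n - {xs} then ?w xs else 0)"
    and "(\<Sum>ys | length ys = n. prefix_weight M ys) = sum ?w (prodsp n)"
    by (rule sum.cong; simp add: prodsp_def avoid_prefix_length_eq prefix_weight_def)+
  then show "prefix_mass n M n A = cosingleton_mass (prodsp n) ?w A"
    by (simp only: prefix_mass_def cosingleton_mass_def)
qed

lemma cosingleton_mass_compl:
  assumes "finite \<Theta>" and "x \<in> \<Theta>"
  shows "cosingleton_mass \<Theta> w (\<Theta> - {x}) = w x"
proof -
  have "\<Theta> - {x} = \<Theta> - {y} \<longleftrightarrow> x = y" if "y \<in> \<Theta>" for y
    using assms(2) that by blast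
  then show ?thesis
    using assms by (auto simp: cosingleton_mass_def cong: sum.cong)
qed

lemma cosingleton_mass_whole: "cosingleton_mass \<Theta> w \<Theta> = 1 - sum w \<Theta>"
  unfolding cosingleton_mass_def by (subst sum.neutral) auto

lemma cosingleton_mass_eq_0:
  assumes "A \<noteq> \<Theta>" and "\<forall>x\<in>\<Theta>. A \<noteq> \<Theta> - {x}"
  shows "cosingleton_mass \<Theta> w A = 0"
  using assms by (simp add: cosingleton_mass_def)

lemma focal_cosingleton_mass:
  assumes "finite \<Theta>" and "\<forall>x\<in>\<Theta>. 0 < w x" and "sum w \<Theta> < 1"
  shows "focal (cosingleton_mass \<Theta> w) = insert \<Theta> ((\<lambda>x. \<Theta> - {x}) ` \<Theta>)"
proof (intro set_eqI iffI)
  fix A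
  assume "A \<in> focal (cosingleton_mass \<Theta> w)"
  then show "A \<in> insert \<Theta> ((\<lambda>x. \<Theta> - {x}) ` \<Theta>)"
    using cosingleton_mass_eq_0[of A \<Theta> w] by (force simp: focal_def)
next
  fix A
  assume "A \<in> insert \<Theta> ((\<lambda>x. \<Theta> - {x}) ` \<Theta>)"
  then show "A \<in> focal (cosingleton_mass \<Theta> w)"
    using assms by (auto simp: focal_def cosingleton_mass_compl cosingleton_mass_whole)
qed

lemma card_insert_cosingletons:
  assumes "finite \<Theta>"
  shows "card (insert \<Theta> ((\<lambda>x. \<Theta> - {x}) ` \<Theta>)) = card \<Theta> + 1"
proof -
  have "inj_on (\<lambda>x. \<Theta> - {x}) \<Theta>"
    by (rule inj_onI) blast
  moreover have "\<Theta> \<notin> (\<lambda>x. \<Theta> - {x}) ` \<Theta>"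
    by blast
  ultimately show ?thesis
    using assms by (simp add: card_image)
qed

lemma sum_prod_compl_less_1:
  assumes "n \<ge> 1" and "\<forall>i<n. is_mass UNIV (M i) \<and> 0 < M i UNIV"
  shows "(\<Sum>xs\<in>prodsp n. \<Prod>i<n. M i (- {xs ! i})) < 1"
proof -
  have "(\<Sum>xs\<in>prodsp n. \<Prod>i<n. M i (- {xs ! i})) = (\<Prod>i<n. M i {True} + M i {False})"
    using sum_length_prod[where k = n and f = "\<lambda>i b. M i (- {b})"]
    by (simp add: prodsp_def UNIV_bool Compl_singleton_bool)
  also have "\<dots> < (\<Prod>i<n. 1)"
  proof (rule prod_mono_strict)
    have factor: "0 \<le> M i {True} \<and> 0 \<le> M i {False} \<and> M i {True} + M i {False} < 1"
      if "i < n" for i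
      using that assms(2) is_mass_bool(2)[of "M i"] by (auto simp: is_mass_def)
    then show "0 \<le> M i {True} + M i {False} \<and> M i {True} + M i {False} \<le> 1"
      if "i \<in> {..<n}" for i
      using that by fastforce
    show "M 0 {True} + M 0 {False} < 1"
      using factor assms(1) by simp
  qed (use assms(1) in auto)
  finally show ?thesis
    by simp
qed

theorem lemma2:
  fixes n :: nat and M :: "nat \<Rightarrow> bool set \<Rightarrow> real" and m :: "bool list set \<Rightarrow> real"
  assumes "n \<ge> 1"
    and "\<forall>i<n. is_mass (UNIV :: bool set) (M i)"
    and "m = disjN (prodsp n) (\<lambda>i. vac n i (M i)) (n - 1)"
  shows "(\<forall>xs\<in>prodsp n. m (prodsp n - {xs}) = (\<Prod>i<n. M i (- {xs ! i})))
    \<and> m (prodsp n) = 1 - (\<Sum>xs\<in>prodsp n. \<Prod>i<n. M i (- {xs ! i}))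
    \<and> (\<forall>A. A \<noteq> prodsp n \<and> (\<forall>xs\<in>prodsp n. A \<noteq> prodsp n - {xs}) \<longrightarrow> m A = 0)
    \<and> ((\<forall>i<n. M i {True} > 0 \<and> M i {False} > 0 \<and> M i UNIV > 0) \<longrightarrow>
         focal m = insert (prodsp n) ((\<lambda>xs. prodsp n - {xs}) ` prodsp n)
         \<and> card (focal m) = 2 ^ n + 1)"
proof -
  let ?\<Theta> = "prodsp n" and ?w = "\<lambda>xs. \<Prod>i<n. M i (- {xs ! i})"
  have m: "m = cosingleton_mass ?\<Theta> ?w"
    using assms disjN_vac_eq_prefix_mass[of "n - 1" n M] by (simp add: prefix_mass_length_eq)
  have "focal m = insert ?\<Theta> ((\<lambda>xs. ?\<Theta> - {xs}) ` ?\<Theta>)"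
    if pos: "\<forall>i<n. M i {True} > 0 \<and> M i {False} > 0 \<and> M i UNIV > 0"
  proof -
    have "0 < M i (- {b})" if "i < n" for i b
      using pos that by (cases b) (auto simp: Compl_singleton_bool)
    then have "\<forall>xs\<in>?\<Theta>. 0 < ?w xs"
      by (auto intro: prod_pos)
    moreover have "sum ?w ?\<Theta> < 1"
      using sum_prod_compl_less_1 assms(1,2) pos by blast
    ultimately show ?thesis
      unfolding m by (rule focal_cosingleton_mass[OF finite_prodsp])
  qed
  then show ?thesis
    by (simp add: m finite_prodsp card_prodsp cosingleton_mass_compl cosingleton_mass_whole
        cosingleton_mass_eq_0 card_insert_cosingletons)
qed

end
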